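(* Let $M$ be a $2\times2$ quaternionic matrix and $A\in SL_2\mathcal{V}$. Then $\mathrm{pdet}(AM)=\mathrm{pdet}(M)$.
   Context: For $q=a+bi+cj+dk\in\mathbb{H}$, $q^*=a+bi+cj-dk$. $\mathcal{V}=\mathrm{span}_\mathbb{R}\{1,i,j\}$. For a quaternionic matrix $\begin{pmatrix}a&b\\c&d\end{pmatrix}$, $\mathrm{pdet}=a^*d-c^*b$. $SL_2\mathcal{V}$ is the set of quaternionic matrices $\begin{pmatrix}a&b\\c&d\end{pmatrix}$ with $ab^*,cd^*,c^*a,d^*b,ba^*,dc^*,a^*c,b^*d\in\mathcal{V}$ and $ad^*-bc^*=da^*-cb^*=d^*a-b^*c=a^*d-c^*b=1$. *)

theory Defs
  imports "HOL-Analysis.Analysis"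
begin

codatatype quat = Quat (Re: real) (Im1: real) (Im2: real) (Im3: real)

lemma quat_eqI [intro?]:
  "\<lbrakk>Re x = Re y; Im1 x = Im1 y; Im2 x = Im2 y; Im3 x = Im3 y\<rbrakk> \<Longrightarrow> x = y"
  by (rule quat.expand) simp

lemma quat_eq_iff:
  "x = y \<longleftrightarrow> Re x = Re y \<and> Im1 x = Im1 y \<and> Im2 x = Im2 y \<and> Im3 x = Im3 y"
  by (auto intro: quat_eqI)

instantiation quat :: ring_1
begin

primcorec zero_quat where
  "Re 0 = 0" | "Im1 0 = 0" | "Im2 0 = 0" | "Im3 0 = 0"

primcorec one_quat where
  "Re 1 = 1" | "Im1 1 = 0" | "Im2 1 = 0" | "Im3 1 = 0"

primcorec plus_quat where
  "Re (x + y) = Re x + Re y" | "Im1 (x + y) = Im1 x + Im1 y"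
| "Im2 (x + y) = Im2 x + Im2 y" | "Im3 (x + y) = Im3 x + Im3 y"

primcorec uminus_quat where
  "Re (- x) = - Re x" | "Im1 (- x) = - Im1 x"
| "Im2 (- x) = - Im2 x" | "Im3 (- x) = - Im3 x"

primcorec minus_quat where
  "Re (x - y) = Re x - Re y" | "Im1 (x - y) = Im1 x - Im1 y"
| "Im2 (x - y) = Im2 x - Im2 y" | "Im3 (x - y) = Im3 x - Im3 y"

text \<open>Hamilton product with i^2 = j^2 = k^2 = ijk = -1.\<close>
primcorec times_quat where
  "Re (x * y) = Re x * Re y - Im1 x * Im1 y - Im2 x * Im2 y - Im3 x * Im3 y"
| "Im1 (x * y) = Re x * Im1 y + Im1 x * Re y + Im2 x * Im3 y - Im3 x * Im2 y"
| "Im2 (x * y) = Re x * Im2 y - Im1 x * Im3 y + Im2 x * Re y + Im3 x * Im1 y"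
| "Im3 (x * y) = Re x * Im3 y + Im1 x * Im2 y - Im2 x * Im1 y + Im3 x * Re y"

instance
  by standard (auto simp: quat_eq_iff algebra_simps)

end

definition qstar :: "quat \<Rightarrow> quat" where
  "qstar q = Quat (Re q) (Im1 q) (Im2 q) (- Im3 q)"

definition Vspace :: "quat set" where
  "Vspace = {q. Im3 q = 0}"

text \<open>2x2 quaternionic matrices, entries indexed by 1,2; \<open>(a b; c d)\<close>.\<close>
type_synonym qmat = "quat ^ 2 ^ 2"

definition pdet :: "qmat \<Rightarrow> quat" where
  "pdet M = (let a = M$1$1; b = M$1$2; c = M$2$1; d = M$2$2
             in qstar a * d - qstar c * b)"

definition SL2V :: "qmat set" where
  "SL2V = {M. let a = M$1$1; b = M$1$2; c = M$2$1; d = M$2$2 in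
     a * qstar b \<in> Vspace \<and> c * qstar d \<in> Vspace \<and> qstar c * a \<in> Vspace \<and>
     qstar d * b \<in> Vspace \<and> b * qstar a \<in> Vspace \<and> d * qstar c \<in> Vspace \<and>
     qstar a * c \<in> Vspace \<and> qstar b * d \<in> Vspace \<and>
     a * qstar d - b * qstar c = 1 \<and> d * qstar a - c * qstar b = 1 \<and>
     qstar d * a - qstar b * c = 1 \<and> qstar a * d - qstar c * b = 1}"

end

theory Submission
  imports Defs
begin

text \<open>Writing \<open>A = (a b; c d)\<close> and \<open>M = (m n; p q)\<close>, the quaternion \<open>pdet (A M)\<close> expands to
  \<open>m\<^sup>*(a\<^sup>*c - c\<^sup>*a)n + m\<^sup>*(a\<^sup>*d - c\<^sup>*b)q - p\<^sup>*(d\<^sup>*a - b\<^sup>*c)n + p\<^sup>*(b\<^sup>*d - d\<^sup>*b)q\<close>, because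
  \<open>*\<close> is an additive anti-involution. For \<open>A \<in> SL\<^sub>2\<V>\<close> the products \<open>a\<^sup>*c\<close> and \<open>b\<^sup>*d\<close> lie in \<open>\<V>\<close>,
  where \<open>*\<close> is the identity, so the outer brackets vanish, and the middle ones are \<open>1\<close>;
  what remains is \<open>m\<^sup>*q - p\<^sup>*n = pdet M\<close>.\<close>

lemma qstar_mult: "qstar (x * y) = qstar y * qstar x"
  by (simp add: qstar_def quat_eq_iff algebra_simps)

lemma qstar_add: "qstar (x + y) = qstar x + qstar y"
  by (simp add: qstar_def quat_eq_iff)

lemma qstar_qstar [simp]: "qstar (qstar x) = x"
  by (simp add: qstar_def quat_eq_iff)

lemma qstar_Vspace: "v \<in> Vspace \<Longrightarrow> qstar v = v"
  by (simp add: qstar_def quat_eq_iff Vspace_def)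

lemma qstar_mult_commute_if_Vspace:
  assumes "qstar x * y \<in> Vspace"
  shows "qstar x * y = qstar y * x"
proof -
  have "qstar x * y = qstar (qstar x * y)"
    using qstar_Vspace[OF assms] by simp
  also have "\<dots> = qstar y * x"
    by (simp add: qstar_mult)
  finally show ?thesis .
qed

lemma pdet_matrix_mult:
  fixes A M :: qmat
  defines "a \<equiv> A$1$1" and "b \<equiv> A$1$2" and "c \<equiv> A$2$1" and "d \<equiv> A$2$2"
    and "m \<equiv> M$1$1" and "n \<equiv> M$1$2" and "p \<equiv> M$2$1" and "q \<equiv> M$2$2"
  shows "pdet (A ** M) =
      qstar m * (qstar a * c - qstar c * a) * n + qstar m * (qstar a * d - qstar c * b) * q
    - qstar p * (qstar d * a - qstar b * c) * n + qstar p * (qstar b * d - qstar d * b) * q"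
proof -
  have "(A ** M)$1$1 = a*m + b*p" "(A ** M)$1$2 = a*n + b*q"
       "(A ** M)$2$1 = c*m + d*p" "(A ** M)$2$2 = c*n + d*q"
    by (simp_all add: matrix_matrix_mult_def sum_2 assms)
  then have "pdet (A ** M) = (qstar m * qstar a + qstar p * qstar b) * (c*n + d*q)
      - (qstar m * qstar c + qstar p * qstar d) * (a*n + b*q)"
    by (simp add: pdet_def qstar_add qstar_mult)
  then show ?thesis
    by (simp add: algebra_simps)
qed

lemma pdet_matrix_mult_eq:
  fixes A M :: qmat
  assumes "qstar (A$1$1) * A$2$1 = qstar (A$2$1) * A$1$1"
    and "qstar (A$1$2) * A$2$2 = qstar (A$2$2) * A$1$2"
    and "qstar (A$1$1) * A$2$2 - qstar (A$2$1) * A$1$2 = 1"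
    and "qstar (A$2$2) * A$1$1 - qstar (A$1$2) * A$2$1 = 1"
  shows "pdet (A ** M) = pdet M"
  unfolding pdet_matrix_mult using assms by (simp add: pdet_def)

lemma SL2V_relations:
  assumes "A \<in> SL2V"
  shows "qstar (A$1$1) * A$2$1 = qstar (A$2$1) * A$1$1"
    and "qstar (A$1$2) * A$2$2 = qstar (A$2$2) * A$1$2"
    and "qstar (A$1$1) * A$2$2 - qstar (A$2$1) * A$1$2 = 1"
    and "qstar (A$2$2) * A$1$1 - qstar (A$1$2) * A$2$1 = 1"
  using assms qstar_mult_commute_if_Vspace by (auto simp: SL2V_def Let_def)

theorem lemma3p20:
  fixes M A :: qmat
  assumes "A \<in> SL2V"
  shows "pdet (A ** M) = pdet M"
  using pdet_matrix_mult_eq SL2V_relations[OF assms] by blast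

end
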